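(* Let $G^1=(V,A)$ be a directed graph, in which no two arcs join the same pair of vertices (in either direction) and there are no loops, with capacities $c\colon A\to\mathbb{Z}_{>0}$, distinct vertices $s,t$, and an integer $R\ge 0$. Let $G^2$ be the underlying undirected graph of $G^1$, where the edge $uv$ coming from arc $(u,v)$ gets weight $w(uv)=c(u,v)/2$. For each $v\in V$ let $\beta_v$ be the sum of $c(a)$ over all arcs $a$ of $G^1$ directed into $v$, and set $d_v=\beta_v/2$ for $v\notin\{s,t\}$, $d_s=R/2+\beta_s/2$, $d_t=-R/2+\beta_t/2$. Then there is an all-or-nothing $s$-$t$-flow in $G^1$ of value $R$ (a flow $f$ with $f(a)\in\{0,c(a)\}$ for every arc $a$) if and only if there is an orientation of $G^2$ in which, for every vertex $v$, the total weight of the edges directed out of $v$ equals $d_v$.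
   Context: An $s$-$t$-flow in a directed graph with capacities $c$ is a function $f\colon A\to\mathbb{Z}_{\ge0}$ with $0\le f(a)\le c(a)$ for all arcs and flow conservation (inflow equals outflow) at every vertex other than $s,t$; its value is the outflow of $s$ minus the inflow of $s$. An orientation of an undirected graph chooses a direction for each edge. *)

theory Defs
  imports Complex_Main
begin

definition simple_digraph :: "'a set \<Rightarrow> ('a \<times> 'a) set \<Rightarrow> bool" where
  "simple_digraph V A \<longleftrightarrow> A \<subseteq> V \<times> V \<and> (\<forall>(u,v)\<in>A. u \<noteq> v \<and> (v,u) \<notin> A)"

definition in_arcs :: "('a \<times> 'a) set \<Rightarrow> 'a \<Rightarrow> ('a \<times> 'a) set" where
  "in_arcs A v = {a \<in> A. snd a = v}"

definition out_arcs :: "('a \<times> 'a) set \<Rightarrow> 'a \<Rightarrow> ('a \<times> 'a) set" where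
  "out_arcs A v = {a \<in> A. fst a = v}"

definition is_st_flow ::
  "'a set \<Rightarrow> ('a \<times> 'a) set \<Rightarrow> ('a \<times> 'a \<Rightarrow> int) \<Rightarrow> 'a \<Rightarrow> 'a \<Rightarrow> ('a \<times> 'a \<Rightarrow> int) \<Rightarrow> bool" where
  "is_st_flow V A c s t f \<longleftrightarrow>
     (\<forall>a\<in>A. 0 \<le> f a \<and> f a \<le> c a) \<and>
     (\<forall>v\<in>V - {s, t}. (\<Sum>a\<in>in_arcs A v. f a) = (\<Sum>a\<in>out_arcs A v. f a))"

definition flow_value :: "('a \<times> 'a) set \<Rightarrow> 'a \<Rightarrow> ('a \<times> 'a \<Rightarrow> int) \<Rightarrow> int" where
  "flow_value A s f = (\<Sum>a\<in>out_arcs A s. f a) - (\<Sum>a\<in>in_arcs A s. f a)"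

definition all_or_nothing :: "('a \<times> 'a) set \<Rightarrow> ('a \<times> 'a \<Rightarrow> int) \<Rightarrow> ('a \<times> 'a \<Rightarrow> int) \<Rightarrow> bool" where
  "all_or_nothing A c f \<longleftrightarrow> (\<forall>a\<in>A. f a = 0 \<or> f a = c a)"

definition underlying_edges :: "('a \<times> 'a) set \<Rightarrow> 'a set set" where
  "underlying_edges A = {{u, v} | u v. (u, v) \<in> A}"

definition und_weight :: "('a \<times> 'a) set \<Rightarrow> ('a \<times> 'a \<Rightarrow> int) \<Rightarrow> 'a set \<Rightarrow> real" where
  "und_weight A c e = real_of_int (c (SOME a. a \<in> A \<and> {fst a, snd a} = e)) / 2"

definition is_orientation :: "'a set set \<Rightarrow> ('a \<times> 'a) set \<Rightarrow> bool" where
  "is_orientation E Or \<longleftrightarrow>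
     (\<forall>(u,v)\<in>Or. {u, v} \<in> E) \<and> (\<forall>e\<in>E. \<exists>!p. p \<in> Or \<and> {fst p, snd p} = e)"

definition out_weight :: "('a \<times> 'a) set \<Rightarrow> ('a set \<Rightarrow> real) \<Rightarrow> 'a \<Rightarrow> real" where
  "out_weight Or w v = (\<Sum>p\<in>{p \<in> Or. fst p = v}. w {fst p, snd p})"

definition beta :: "('a \<times> 'a) set \<Rightarrow> ('a \<times> 'a \<Rightarrow> int) \<Rightarrow> 'a \<Rightarrow> int" where
  "beta A c v = (\<Sum>a\<in>in_arcs A v. c a)"

definition demand :: "('a \<times> 'a) set \<Rightarrow> ('a \<times> 'a \<Rightarrow> int) \<Rightarrow> 'a \<Rightarrow> 'a \<Rightarrow> int \<Rightarrow> 'a \<Rightarrow> real" where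
  "demand A c s t R v =
     (if v = s then real_of_int R / 2 + real_of_int (beta A c v) / 2
      else if v = t then - real_of_int R / 2 + real_of_int (beta A c v) / 2
      else real_of_int (beta A c v) / 2)"

end

theory Submission
  imports Defs
begin

text \<open>An orientation of the underlying graph is determined by the set \<open>F\<close> of arcs it keeps
  in their original direction. Out of \<open>v\<close> it then directs the arcs of \<open>F\<close> leaving \<open>v\<close> and the
  arcs outside \<open>F\<close> entering \<open>v\<close>, so its out-weight at \<open>v\<close> is half of the net outflow at \<open>v\<close> of
  the all-or-nothing flow saturating exactly \<open>F\<close>, plus \<open>\<beta>\<^sub>v/2\<close>. Hence the out-weight equals
  \<open>d\<^sub>v\<close> everywhere iff that flow has net outflow \<open>R\<close> at \<open>s\<close>, \<open>-R\<close> at \<open>t\<close> and \<open>0\<close> elsewhere.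
  For an \<open>s\<close>-\<open>t\<close>-flow the value at \<open>t\<close> is forced, because net outflows sum to zero.\<close>

definition reorient :: "('a \<times> 'a) set \<Rightarrow> ('a \<times> 'a) set \<Rightarrow> ('a \<times> 'a) set" where
  "reorient A F = F \<union> prod.swap ` (A - F)"

definition saturate :: "('a \<times> 'a \<Rightarrow> int) \<Rightarrow> ('a \<times> 'a) set \<Rightarrow> 'a \<times> 'a \<Rightarrow> int" where
  "saturate c F a = (if a \<in> F then c a else 0)"

definition excess :: "'a \<Rightarrow> 'a \<Rightarrow> int \<Rightarrow> 'a \<Rightarrow> int" where
  "excess s t R v = (if v = s then R else if v = t then - R else 0)"

lemma doubleton_pair_iff: "{fst p, snd p} = {u, v} \<longleftrightarrow> p = (u, v) \<or> p = (v, u)"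
  by (cases p) (auto simp: doubleton_eq_iff)

lemma simple_digraph_swap_notin:
  assumes "simple_digraph V A" "a \<in> A"
  shows "prod.swap a \<notin> A"
  using assms by (cases a) (auto simp: simple_digraph_def)

lemma und_weight_arc:
  assumes "simple_digraph V A" "(u, v) \<in> A"
  shows "und_weight A c {u, v} = real_of_int (c (u, v)) / 2"
proof -
  have "(v, u) \<notin> A"
    using simple_digraph_swap_notin[OF assms] by simp
  then have "(SOME b. b \<in> A \<and> {fst b, snd b} = {u, v}) = (u, v)"
    using assms(2) by (intro some_equality) (auto simp: doubleton_pair_iff)
  then show ?thesis
    by (simp add: und_weight_def)
qed

lemma mem_reorient_arc:
  assumes "simple_digraph V A" "F \<subseteq> A" "a \<in> A"
  shows "a \<in> reorient A F \<longleftrightarrow> a \<in> F"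
    and "prod.swap a \<in> reorient A F \<longleftrightarrow> a \<notin> F"
proof -
  have "prod.swap a \<notin> A"
    using simple_digraph_swap_notin[OF assms(1,3)] .
  moreover have swap_image: "b \<in> prod.swap ` B \<longleftrightarrow> prod.swap b \<in> B" for b B
    by (metis image_iff swap_swap)
  ultimately show "a \<in> reorient A F \<longleftrightarrow> a \<in> F"
    and "prod.swap a \<in> reorient A F \<longleftrightarrow> a \<notin> F"
    using assms(2,3) unfolding reorient_def Un_iff swap_image swap_swap by blast+
qed

lemma is_orientation_reorient:
  assumes sd: "simple_digraph V A" and F: "F \<subseteq> A"
  shows "is_orientation (underlying_edges A) (reorient A F)"
  unfolding is_orientation_def
proof (intro conjI ballI)
  fix p assume "p \<in> reorient A F"
  then have "p \<in> A \<or> prod.swap p \<in> A"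
    using F by (auto simp: reorient_def)
  then show "case p of (u, v) \<Rightarrow> {u, v} \<in> underlying_edges A"
    by (cases p) (auto simp: underlying_edges_def insert_commute)
next
  fix e assume "e \<in> underlying_edges A"
  then obtain u v where uv: "(u, v) \<in> A" "e = {u, v}"
    by (auto simp: underlying_edges_def)
  have "p \<in> reorient A F \<and> {fst p, snd p} = e \<longleftrightarrow>
      p = (if (u, v) \<in> F then (u, v) else (v, u))" for p
    using mem_reorient_arc[OF sd F uv(1)] by (auto simp: uv(2) doubleton_pair_iff)
  then show "\<exists>!p. p \<in> reorient A F \<and> {fst p, snd p} = e"
    by simp
qed

lemma orientation_eq_reorient:
  assumes sd: "simple_digraph V A" and Or: "is_orientation (underlying_edges A) Or"
  shows "Or = reorient A (Or \<inter> A)"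
proof -
  have edge: "{fst p, snd p} \<in> underlying_edges A" if "p \<in> Or" for p
    using Or that by (cases p) (auto simp: is_orientation_def)
  have unique: "\<exists>!p. p \<in> Or \<and> {fst p, snd p} = {u, v}" if "(u, v) \<in> A" for u v
  proof -
    have "{u, v} \<in> underlying_edges A"
      using that by (auto simp: underlying_edges_def)
    then show ?thesis
      using Or by (simp add: is_orientation_def)
  qed
  have one_of: "(u, v) \<in> Or \<longleftrightarrow> (v, u) \<notin> Or" if uv: "(u, v) \<in> A" for u v
  proof -
    have "u \<noteq> v"
      using sd uv by (auto simp: simple_digraph_def)
    then show ?thesis
      using unique[OF uv] by (auto simp: doubleton_pair_iff)
  qed
  show ?thesis
  proof (rule set_eqI)
    fix p :: "'a \<times> 'a"
    obtain u v where p: "p = (u, v)" by (cases p)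
    show "p \<in> Or \<longleftrightarrow> p \<in> reorient A (Or \<inter> A)"
    proof (cases "p \<in> A")
      case True
      then show ?thesis
        using mem_reorient_arc(1)[OF sd Int_lower2 True] by simp
    next
      case False
      have "p \<in> Or \<longleftrightarrow> (v, u) \<in> A \<and> (v, u) \<notin> Or"
      proof
        assume "p \<in> Or"
        then have "{u, v} \<in> underlying_edges A"
          using edge[of p] by (simp add: p)
        then obtain x y where "(x, y) \<in> A" "{u, v} = {x, y}"
          unfolding underlying_edges_def by blast
        with False have "(v, u) \<in> A"
          by (auto simp: p doubleton_eq_iff)
        with \<open>p \<in> Or\<close> show "(v, u) \<in> A \<and> (v, u) \<notin> Or"
          using one_of[of v u] by (simp add: p)
      qed (use one_of[of v u] in \<open>simp add: p\<close>)
      moreover have "p \<in> reorient A (Or \<inter> A) \<longleftrightarrow> (v, u) \<in> A \<and> (v, u) \<notin> Or"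
        using False by (auto simp: p reorient_def)
      ultimately show ?thesis
        by blast
    qed
  qed
qed

lemma sum_saturate:
  assumes "finite S"
  shows "(\<Sum>a\<in>S. saturate c F a) = (\<Sum>a\<in>S \<inter> F. c a)"
  using assms by (simp add: sum.inter_restrict saturate_def)

lemma out_weight_reorient:
  assumes sd: "simple_digraph V A" and fin: "finite A" and F: "F \<subseteq> A"
  shows "out_weight (reorient A F) (und_weight A c) v =
    real_of_int (flow_value A v (saturate c F) + beta A c v) / 2"
proof -
  let ?w = "und_weight A c" and ?Out = "out_arcs A v \<inter> F" and ?In = "in_arcs A v - F"
  have fin_arcs: "finite (out_arcs A v)" "finite (in_arcs A v)"
    using fin by (auto simp: out_arcs_def in_arcs_def)
  have split: "{p \<in> reorient A F. fst p = v} = ?Out \<union> prod.swap ` ?In"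
    using F by (auto simp: reorient_def out_arcs_def in_arcs_def)
  have disjoint: "?Out \<inter> prod.swap ` ?In = {}"
    using simple_digraph_swap_notin[OF sd] by (auto simp: out_arcs_def in_arcs_def)
  have weight: "?w {fst a, snd a} = real_of_int (c a) / 2" if "a \<in> A" for a
    using und_weight_arc[OF sd, of "fst a" "snd a"] that by simp
  have "out_weight (reorient A F) ?w v =
      (\<Sum>p\<in>?Out. ?w {fst p, snd p}) + (\<Sum>p\<in>prod.swap ` ?In. ?w {fst p, snd p})"
    unfolding out_weight_def split using fin_arcs disjoint by (simp add: sum.union_disjoint)
  also have "(\<Sum>p\<in>prod.swap ` ?In. ?w {fst p, snd p}) = (\<Sum>p\<in>?In. ?w {fst p, snd p})"
    by (simp add: sum.reindex insert_commute)
  also have "(\<Sum>p\<in>?Out. ?w {fst p, snd p}) + (\<Sum>p\<in>?In. ?w {fst p, snd p}) =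
      (\<Sum>a\<in>?Out. real_of_int (c a) / 2) + (\<Sum>a\<in>?In. real_of_int (c a) / 2)"
    by (intro arg_cong2[where f = "(+)"] sum.cong refl weight) (auto simp: out_arcs_def in_arcs_def)
  also have "\<dots> = real_of_int ((\<Sum>a\<in>?Out. c a) + (\<Sum>a\<in>?In. c a)) / 2"
    by (simp add: sum_divide_distrib add_divide_distrib)
  also have "(\<Sum>a\<in>?Out. c a) + (\<Sum>a\<in>?In. c a) = flow_value A v (saturate c F) + beta A c v"
    using fin_arcs sum.Int_Diff[OF fin_arcs(2), of c F]
    by (simp add: flow_value_def beta_def sum_saturate)
  finally show ?thesis .
qed

lemma out_weight_eq_demand_iff:
  assumes "simple_digraph V A" "finite A" "F \<subseteq> A"
  shows "out_weight (reorient A F) (und_weight A c) v = demand A c s t R v \<longleftrightarrow>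
    flow_value A v (saturate c F) = excess s t R v"
proof -
  have "real_of_int (flow_value A v (saturate c F) + beta A c v) / 2 = demand A c s t R v \<longleftrightarrow>
      real_of_int (flow_value A v (saturate c F)) = real_of_int (excess s t R v)"
    by (auto simp: demand_def excess_def field_simps)
  then show ?thesis
    by (simp only: out_weight_reorient[OF assms] of_int_eq_iff)
qed

lemma orientation_demand_iff_saturating_flow:
  assumes "simple_digraph V A" "finite A"
  shows "(\<exists>Or. is_orientation (underlying_edges A) Or \<and>
            (\<forall>v\<in>V. out_weight Or (und_weight A c) v = demand A c s t R v)) \<longleftrightarrow>
    (\<exists>F\<subseteq>A. \<forall>v\<in>V. flow_value A v (saturate c F) = excess s t R v)"
proof
  assume "\<exists>Or. is_orientation (underlying_edges A) Or \<and>
            (\<forall>v\<in>V. out_weight Or (und_weight A c) v = demand A c s t R v)"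
  then obtain Or where Or: "is_orientation (underlying_edges A) Or"
    and demand: "\<forall>v\<in>V. out_weight Or (und_weight A c) v = demand A c s t R v"
    by blast
  define F where "F = Or \<inter> A"
  have F: "F \<subseteq> A" and Or_eq: "Or = reorient A F"
    using orientation_eq_reorient[OF assms(1) Or] by (auto simp: F_def)
  show "\<exists>F\<subseteq>A. \<forall>v\<in>V. flow_value A v (saturate c F) = excess s t R v"
    using F demand by (intro exI[of _ F]) (simp add: Or_eq out_weight_eq_demand_iff[OF assms F])
next
  assume "\<exists>F\<subseteq>A. \<forall>v\<in>V. flow_value A v (saturate c F) = excess s t R v"
  then obtain F where F: "F \<subseteq> A" and flow: "\<forall>v\<in>V. flow_value A v (saturate c F) = excess s t R v"
    by blast
  show "\<exists>Or. is_orientation (underlying_edges A) Or \<and>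
            (\<forall>v\<in>V. out_weight Or (und_weight A c) v = demand A c s t R v)"
    using is_orientation_reorient[OF assms(1) F] flow
    by (intro exI[of _ "reorient A F"]) (simp add: out_weight_eq_demand_iff[OF assms F])
qed

lemma flow_value_cong: "(\<And>a. a \<in> A \<Longrightarrow> f a = g a) \<Longrightarrow> flow_value A v f = flow_value A v g"
  by (simp add: flow_value_def out_arcs_def in_arcs_def)

lemma conservation_iff_flow_value_eq_0:
  "(\<Sum>a\<in>in_arcs A v. f a) = (\<Sum>a\<in>out_arcs A v. f a) \<longleftrightarrow> flow_value A v f = 0"
  by (auto simp: flow_value_def)

lemma sum_flow_value_eq_0:
  assumes "finite V" "A \<subseteq> V \<times> V"
  shows "(\<Sum>v\<in>V. flow_value A v f) = 0"
proof -
  have "finite A"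
    using assms finite_subset by blast
  then have "(\<Sum>v\<in>V. \<Sum>a\<in>out_arcs A v. f a) = sum f A" "(\<Sum>v\<in>V. \<Sum>a\<in>in_arcs A v. f a) = sum f A"
    using sum.group[of A V fst f] sum.group[of A V snd f] assms
    by (fastforce simp: out_arcs_def in_arcs_def)+
  then show ?thesis
    by (simp add: flow_value_def sum_subtractf)
qed

lemma flow_value_target:
  assumes "finite V" "A \<subseteq> V \<times> V" "s \<in> V" "t \<in> V" "s \<noteq> t"
    and conservation: "\<forall>v\<in>V - {s, t}. flow_value A v f = 0"
  shows "flow_value A t f = - flow_value A s f"
proof -
  have "0 = (\<Sum>v\<in>V. flow_value A v f)"
    using sum_flow_value_eq_0[OF assms(1,2)] by simp
  also have "\<dots> = flow_value A s f + (\<Sum>v\<in>V - {s}. flow_value A v f)"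
    using assms(1,3) by (intro sum.remove) auto
  also have "(\<Sum>v\<in>V - {s}. flow_value A v f) =
      flow_value A t f + (\<Sum>v\<in>V - {s} - {t}. flow_value A v f)"
    using assms(1,4,5) by (intro sum.remove) auto
  also have "V - {s} - {t} = V - {s, t}"
    by blast
  also have "(\<Sum>v\<in>V - {s, t}. flow_value A v f) = 0"
    using conservation by simp
  finally show ?thesis
    by simp
qed

lemma all_or_nothing_flow_iff_saturating_flow:
  assumes "finite V" "A \<subseteq> V \<times> V" "\<forall>a\<in>A. 0 \<le> c a" "s \<in> V" "t \<in> V" "s \<noteq> t"
  shows "(\<exists>f. is_st_flow V A c s t f \<and> all_or_nothing A c f \<and> flow_value A s f = R) \<longleftrightarrow>
    (\<exists>F\<subseteq>A. \<forall>v\<in>V. flow_value A v (saturate c F) = excess s t R v)"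
proof
  assume "\<exists>f. is_st_flow V A c s t f \<and> all_or_nothing A c f \<and> flow_value A s f = R"
  then obtain f where flow: "is_st_flow V A c s t f" and aon: "all_or_nothing A c f"
    and val: "flow_value A s f = R"
    by blast
  define F where "F = {a \<in> A. f a = c a}"
  have "F \<subseteq> A"
    by (auto simp: F_def)
  have saturate_eq: "flow_value A v (saturate c F) = flow_value A v f" for v
    using aon by (intro flow_value_cong) (auto simp: all_or_nothing_def saturate_def F_def)
  have conservation: "\<forall>v\<in>V - {s, t}. flow_value A v f = 0"
    using flow by (simp add: is_st_flow_def conservation_iff_flow_value_eq_0)
  have "flow_value A t f = - R"
    using flow_value_target[OF assms(1,2,4-6) conservation] val by simp
  then show "\<exists>F\<subseteq>A. \<forall>v\<in>V. flow_value A v (saturate c F) = excess s t R v"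
    using \<open>F \<subseteq> A\<close> conservation val assms(6)
    by (intro exI[of _ F]) (auto simp: saturate_eq excess_def)
next
  assume "\<exists>F\<subseteq>A. \<forall>v\<in>V. flow_value A v (saturate c F) = excess s t R v"
  then obtain F where "\<forall>v\<in>V. flow_value A v (saturate c F) = excess s t R v"
    by blast
  moreover have "\<forall>a\<in>A. 0 \<le> saturate c F a \<and> saturate c F a \<le> c a"
    using assms(3) by (simp add: saturate_def)
  then have "is_st_flow V A c s t (saturate c F) \<longleftrightarrow>
      (\<forall>v\<in>V - {s, t}. flow_value A v (saturate c F) = 0)"
    by (simp add: is_st_flow_def conservation_iff_flow_value_eq_0)
  ultimately show "\<exists>f. is_st_flow V A c s t f \<and> all_or_nothing A c f \<and> flow_value A s f = R"
    using assms(4) by (intro exI[of _ "saturate c F"]) (auto simp: all_or_nothing_def saturate_def excess_def)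
qed

theorem mainTheorem2:
  fixes V :: "'a set" and A :: "('a \<times> 'a) set" and c :: "'a \<times> 'a \<Rightarrow> int"
    and s t :: 'a and R :: int
  assumes "finite V" and "simple_digraph V A"
    and "\<forall>a\<in>A. c a > 0"
    and "s \<in> V" and "t \<in> V" and "s \<noteq> t" and "R \<ge> 0"
  shows "(\<exists>f. is_st_flow V A c s t f \<and> all_or_nothing A c f \<and> flow_value A s f = R)
     \<longleftrightarrow> (\<exists>Or. is_orientation (underlying_edges A) Or \<and>
               (\<forall>v\<in>V. out_weight Or (und_weight A c) v = demand A c s t R v))"
proof -
  have arcs: "A \<subseteq> V \<times> V"
    using assms(2) by (simp add: simple_digraph_def)
  then have "finite A"
    using assms(1) finite_subset by blast
  moreover have "\<forall>a\<in>A. 0 \<le> c a"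
    using assms(3) by (simp add: less_imp_le)
  ultimately show ?thesis
    using all_or_nothing_flow_iff_saturating_flow[OF assms(1) arcs _ assms(4-6)]
      orientation_demand_iff_saturating_flow[OF assms(2)]
    by simp
qed

end
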